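(* Let $F:\mathcal{P}(V,A)\to S_2(A)$ be a consular election rule satisfying SPP and SPO. Let $P$ be a profile with $F(P)=\{a,b\}$, let $i$ be a voter, $s\in A$, and let $P_i'$ be the linear order obtained from $P_i$ by moving $s$ down some number of positions (the relative order of the other alternatives unchanged). If $s\notin\{a,b\}$, then $F(P_i'P_{-i})=F(P)$. If $s=a$ (the case $s=b$ being symmetric), then either $F(P_i'P_{-i})=F(P)$, or $F(P_i'P_{-i})=\{c,b\}$ for some $c\neq s$; and the latter happens only if $s$ drops below $c$, i.e. $s\succ_i c$ in $P_i$ and $c\succ_i' s$ in $P_i'$.
   Context: $V$ is a finite nonempty set of voters, $A$ a finite set of alternatives; a profile $P$ assigns to each voter $i$ a linear order $P_i$ on $A$; $P_i'P_{-i}$ replaces voter $i$'s order by $P_i'$. $S_2(A)$ is the set of 2-element subsets of $A$; a consular election rule is a map $F:\mathcal{P}(V,A)\to S_2(A)$. SPO: for all $P$, $i$, $P_i'$, $\mathrm{best}(P_i,F(P))\succeq_i\mathrm{best}(P_i,F(P_i'P_{-i}))$; SPP: same with $\mathrm{worst}$, where $\mathrm{best}(P_i,W)$, $\mathrm{worst}(P_i,W)$ are the $P_i$-best and $P_i$-worst elements of $W$. *)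

theory Defs
  imports Main
begin

text \<open>Convention: a linear order on A is a relation R with linear_order_on A R;
  (x,y) \<in> R means "x is ranked at least as high as y" (x weakly preferred to y).\<close>

definition profiles :: "'v set \<Rightarrow> 'a set \<Rightarrow> ('v \<Rightarrow> 'a rel) set" where
  "profiles V A = {P. (\<forall>i\<in>V. linear_order_on A (P i)) \<and> (\<forall>i. i \<notin> V \<longrightarrow> P i = {})}"

definition S2 :: "'a set \<Rightarrow> 'a set set" where
  "S2 A = {W. W \<subseteq> A \<and> card W = 2}"

definition consular_rule :: "'v set \<Rightarrow> 'a set \<Rightarrow> (('v \<Rightarrow> 'a rel) \<Rightarrow> 'a set) \<Rightarrow> bool" where
  "consular_rule V A F \<longleftrightarrow> (\<forall>P\<in>profiles V A. F P \<in> S2 A)"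

definition best :: "'a rel \<Rightarrow> 'a set \<Rightarrow> 'a" where
  "best R W = (THE w. w \<in> W \<and> (\<forall>x\<in>W. (w, x) \<in> R))"

definition worst :: "'a rel \<Rightarrow> 'a set \<Rightarrow> 'a" where
  "worst R W = (THE w. w \<in> W \<and> (\<forall>x\<in>W. (x, w) \<in> R))"

definition SPO :: "'v set \<Rightarrow> 'a set \<Rightarrow> (('v \<Rightarrow> 'a rel) \<Rightarrow> 'a set) \<Rightarrow> bool" where
  "SPO V A F \<longleftrightarrow> (\<forall>P\<in>profiles V A. \<forall>i\<in>V. \<forall>Q. linear_order_on A Q \<longrightarrow>
     (best (P i) (F P), best (P i) (F (P(i := Q)))) \<in> P i)"

definition SPP :: "'v set \<Rightarrow> 'a set \<Rightarrow> (('v \<Rightarrow> 'a rel) \<Rightarrow> 'a set) \<Rightarrow> bool" where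
  "SPP V A F \<longleftrightarrow> (\<forall>P\<in>profiles V A. \<forall>i\<in>V. \<forall>Q. linear_order_on A Q \<longrightarrow>
     (worst (P i) (F P), worst (P i) (F (P(i := Q)))) \<in> P i)"

text \<open>Q is obtained from the linear order R by moving s down some (possibly zero)
  number of positions: the relative order of the other alternatives is unchanged,
  and every alternative ranked below s in Q was already ranked below s in R.\<close>
definition moved_down :: "'a set \<Rightarrow> 'a rel \<Rightarrow> 'a \<Rightarrow> 'a rel \<Rightarrow> bool" where
  "moved_down A R s Q \<longleftrightarrow> linear_order_on A Q \<and>
     (\<forall>x\<in>A. \<forall>y\<in>A. x \<noteq> s \<longrightarrow> y \<noteq> s \<longrightarrow> ((x, y) \<in> Q \<longleftrightarrow> (x, y) \<in> R)) \<and>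
     (\<forall>x\<in>A. (s, x) \<in> Q \<longrightarrow> (s, x) \<in> R)"

end

theory Submission
  imports Defs
begin

text \<open>
  Strategy-proofness applies in both directions to a voter switching between P i and Q: neither
  the voter with true order P i gains by reporting Q, nor one with true order Q by reporting P i,
  under either the optimistic or the pessimistic comparison of pairs. When s moves down, P i and Q
  differ only in the position of s, so these four comparisons pin the new outcome down. If s is
  not elected, no pair other than the old one is compatible with them. If s is elected with b,
  and s passes at most one alternative, the only other compatible outcome is {c, b} with c the
  alternative passed. A general move down is a sequence of one-step moves; once s has been
  replaced by some c, the first case keeps {c, b} fixed for the remaining steps, so the statement
  follows by induction on the number of alternatives that s passes.
\<close>

lemma linear_order_onD:
  assumes "linear_order_on A R"
  shows linear_order_on_subset: "(x, y) \<in> R \<Longrightarrow> x \<in> A \<and> y \<in> A"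
    and linear_order_on_refl: "x \<in> A \<Longrightarrow> (x, x) \<in> R"
    and linear_order_on_trans: "(x, y) \<in> R \<Longrightarrow> (y, z) \<in> R \<Longrightarrow> (x, z) \<in> R"
    and linear_order_on_antisym: "(x, y) \<in> R \<Longrightarrow> (y, x) \<in> R \<Longrightarrow> x = y"
    and linear_order_on_total: "x \<in> A \<Longrightarrow> y \<in> A \<Longrightarrow> (x, y) \<in> R \<or> (y, x) \<in> R"
proof -
  have sub: "R \<subseteq> A \<times> A" and refl: "refl_on A R" and trans: "trans R"
    and antisym: "antisym R" and total: "total_on A R"
    using assms unfolding order_on_defs by auto
  show "(x, y) \<in> R \<Longrightarrow> x \<in> A \<and> y \<in> A" using sub by auto
  show "x \<in> A \<Longrightarrow> (x, x) \<in> R" using refl by (simp add: refl_onD)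
  show "(x, y) \<in> R \<Longrightarrow> (y, z) \<in> R \<Longrightarrow> (x, z) \<in> R" using trans by (rule transD)
  show "(x, y) \<in> R \<Longrightarrow> (y, x) \<in> R \<Longrightarrow> x = y" using antisym by (rule antisymD)
  show "x \<in> A \<Longrightarrow> y \<in> A \<Longrightarrow> (x, y) \<in> R \<or> (y, x) \<in> R"
    using total refl by (cases "x = y") (auto simp: total_on_def refl_on_def)
qed

lemma linear_order_on_Field: "linear_order_on A R \<Longrightarrow> Field R = A"
  unfolding order_on_defs Field_def refl_on_def by fast

lemma linear_order_on_lowest:
  assumes "linear_order_on A Q" "finite D" "D \<noteq> {}" "D \<subseteq> A"
  shows "\<exists>y\<in>D. \<forall>z\<in>D. (z, y) \<in> Q"
  using assms(2-4)
proof (induction D rule: finite_ne_induct)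
  case (singleton x)
  then show ?case using linear_order_on_refl[OF assms(1)] by auto
next
  case (insert x D)
  then obtain y where y: "y \<in> D" "\<forall>z\<in>D. (z, y) \<in> Q" by auto
  have "x \<in> A" "y \<in> A" using insert y by auto
  then consider "(x, y) \<in> Q" | "(y, x) \<in> Q" using linear_order_on_total[OF assms(1)] by blast
  then show ?case
    using y linear_order_on_trans[OF assms(1)] linear_order_on_refl[OF assms(1) \<open>x \<in> A\<close>]
    by cases blast+
qed

lemma adjacent_same_neighbours:
  assumes lin: "linear_order_on A Q" and ys: "(y, s) \<in> Q" "y \<noteq> s"
    and adjacent: "\<And>z. (y, z) \<in> Q \<Longrightarrow> (z, s) \<in> Q \<Longrightarrow> z = y \<or> z = s"
    and z: "z \<in> A" "z \<noteq> y" "z \<noteq> s"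
  shows "(z, y) \<in> Q \<longleftrightarrow> (z, s) \<in> Q" and "(y, z) \<in> Q \<longleftrightarrow> (s, z) \<in> Q"
proof -
  have "y \<in> A" "s \<in> A" using linear_order_on_subset[OF lin ys(1)] by auto
  then have "(z, y) \<in> Q \<or> (y, z) \<in> Q" "(z, s) \<in> Q \<or> (s, z) \<in> Q"
    using linear_order_on_total[OF lin z(1)] by auto
  then show "(z, y) \<in> Q \<longleftrightarrow> (z, s) \<in> Q" "(y, z) \<in> Q \<longleftrightarrow> (s, z) \<in> Q"
    using z adjacent ys linear_order_on_trans[OF lin] linear_order_on_antisym[OF lin] by blast+
qed

text \<open>Relabelling Q by the transposition of y and s gives a linear order, and for adjacent y and s
  the relabelled order is Q with the single pair (y, s) reversed.\<close>

lemma linear_order_on_swap_adjacent: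
  assumes lin: "linear_order_on A Q" and ys: "(y, s) \<in> Q" "y \<noteq> s"
    and adjacent: "\<And>z. (y, z) \<in> Q \<Longrightarrow> (z, s) \<in> Q \<Longrightarrow> z = y \<or> z = s"
  shows "linear_order_on A (Q - {(y, s)} \<union> {(s, y)})"
proof -
  define \<tau> where "\<tau> = id(y := s, s := y)"
  have A: "y \<in> A" "s \<in> A" using linear_order_on_subset[OF lin ys(1)] by auto
  have involution: "\<tau> (\<tau> x) = x" for x unfolding \<tau>_def by simp
  have \<tau>A: "\<tau> x \<in> A \<longleftrightarrow> x \<in> A" for x unfolding \<tau>_def using A by simp
  have "inj_on \<tau> A" "\<tau> ` A = A" unfolding \<tau>_def inj_on_def using A by (auto simp: image_iff)
  then have lin': "linear_order_on A (dir_image Q \<tau>)"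
    using Linear_order_dir_image[of Q \<tau>] lin by (simp add: dir_image_Field linear_order_on_Field)
  note neighbours = adjacent_same_neighbours[OF lin ys adjacent]
  have "(\<tau> u, \<tau> v) \<in> Q \<longleftrightarrow> (u, v) \<in> Q - {(y, s)} \<union> {(s, y)}" for u v
  proof (cases "u \<in> A \<and> v \<in> A")
    case True
    then show ?thesis
      using ys A neighbours[of u] neighbours[of v] linear_order_on_refl[OF lin]
        linear_order_on_antisym[OF lin, of s y]
      unfolding \<tau>_def by (cases "u = y"; cases "u = s"; cases "v = y"; cases "v = s") auto
  next
    case False
    then have "(\<tau> u, \<tau> v) \<notin> Q" using \<tau>A linear_order_on_subset[OF lin] by blast
    moreover have "(u, v) \<notin> Q - {(y, s)} \<union> {(s, y)}"
      using False A linear_order_on_subset[OF lin] by blast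
    ultimately show ?thesis by blast
  qed
  moreover have "(u, v) \<in> dir_image Q \<tau> \<longleftrightarrow> (\<tau> u, \<tau> v) \<in> Q" for u v
    unfolding dir_image_def using involution by (auto, metis)
  ultimately have "dir_image Q \<tau> = Q - {(y, s)} \<union> {(s, y)}"
    by (intro set_eqI) (auto simp del: Un_iff)
  with lin' show ?thesis by simp
qed

lemma best_worst_pair:
  assumes "linear_order_on A R" "(u, v) \<in> R" "u \<noteq> v"
  shows "best R {u, v} = u" "worst R {u, v} = v"
proof -
  have "u \<in> A" "v \<in> A" using linear_order_on_subset[OF assms(1,2)] by auto
  note refl = linear_order_on_refl[OF assms(1)] and antisym = linear_order_on_antisym[OF assms(1)]
  show "best R {u, v} = u"
    unfolding best_def using assms refl antisym \<open>u \<in> A\<close> \<open>v \<in> A\<close> by (intro the_equality) blast+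
  show "worst R {u, v} = v"
    unfolding worst_def using assms refl antisym \<open>u \<in> A\<close> \<open>v \<in> A\<close> by (intro the_equality) blast+
qed

lemma S2_ordered_pair:
  assumes "linear_order_on A R" "W \<in> S2 A"
  obtains c d where "W = {c, d}" "c \<noteq> d" "(c, d) \<in> R" "best R W = c" "worst R W = d"
proof -
  obtain x y where W: "W = {x, y}" "x \<noteq> y" "x \<in> A" "y \<in> A"
    using assms(2) unfolding S2_def card_2_iff by auto
  show thesis
  proof (cases "(x, y) \<in> R")
    case True
    then show thesis using that W best_worst_pair[OF assms(1)] by blast
  next
    case False
    then have "(y, x) \<in> R" using linear_order_on_total[OF assms(1) W(3,4)] by blast
    moreover have "W = {y, x}" using W(1) by blast
    ultimately show thesis using that W(2) best_worst_pair[OF assms(1)] by (metis (no_types))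
  qed
qed

definition passed :: "'a set \<Rightarrow> 'a rel \<Rightarrow> 'a \<Rightarrow> 'a rel \<Rightarrow> 'a set" where
  "passed A R s Q = {x \<in> A. x \<noteq> s \<and> (s, x) \<in> R \<and> (x, s) \<in> Q}"

definition switch_unprofitable :: "'a rel \<Rightarrow> 'a rel \<Rightarrow> 'a set \<Rightarrow> 'a set \<Rightarrow> bool" where
  "switch_unprofitable R Q W W' \<longleftrightarrow>
     (best R W, best R W') \<in> R \<and> (worst R W, worst R W') \<in> R \<and>
     (best Q W', best Q W) \<in> Q \<and> (worst Q W', worst Q W) \<in> Q"

lemma moved_downD:
  assumes "moved_down A R s Q"
  shows moved_down_linear: "linear_order_on A Q"
    and moved_down_agree:
      "x \<in> A \<Longrightarrow> y \<in> A \<Longrightarrow> x \<noteq> s \<Longrightarrow> y \<noteq> s \<Longrightarrow> (x, y) \<in> Q \<longleftrightarrow> (x, y) \<in> R"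
    and moved_down_down: "x \<in> A \<Longrightarrow> (s, x) \<in> Q \<Longrightarrow> (s, x) \<in> R"
  using assms unfolding moved_down_def by (elim conjE; blast)+

lemma moved_down_above_other:
  assumes md: "moved_down A R s Q" and zx: "(z, x) \<in> Q" and "x \<noteq> s"
  shows "(z, x) \<in> R"
proof -
  have "z \<in> A" and "x \<in> A" using linear_order_on_subset[OF moved_down_linear[OF md] zx] by auto
  show ?thesis
  proof (cases "z = s")
    case True
    then show ?thesis using moved_down_down[OF md \<open>x \<in> A\<close>] zx by simp
  next
    case False
    then show ?thesis using moved_down_agree[OF md \<open>z \<in> A\<close> \<open>x \<in> A\<close>] zx \<open>x \<noteq> s\<close> by simp
  qed
qed

lemma moved_down_reversal:
  assumes "linear_order_on A R" "moved_down A R s Q" "(x, y) \<in> R" "(y, x) \<in> Q" "x \<noteq> y"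
  shows "x = s"
proof (rule ccontr)
  assume "x \<noteq> s"
  then have "(y, x) \<in> R" using moved_down_above_other[OF assms(2,4)] by simp
  then show False using assms(3,5) linear_order_on_antisym[OF assms(1)] by blast
qed

lemma moved_down_best_worst_pair:
  assumes lin: "linear_order_on A R" and md: "moved_down A R s Q" and cd: "(c, d) \<in> R" "c \<noteq> d"
  shows "best Q {c, d} = c \<and> worst Q {c, d} = d \<or> c = s \<and> best Q {c, d} = d \<and> worst Q {c, d} = s"
proof -
  have linQ: "linear_order_on A Q" using moved_down_linear[OF md] .
  have "c \<in> A" "d \<in> A" using linear_order_on_subset[OF lin cd(1)] by auto
  then consider "(c, d) \<in> Q" | "(d, c) \<in> Q" using linear_order_on_total[OF linQ] by blast
  then show ?thesis
  proof cases
    case 1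
    then show ?thesis using best_worst_pair[OF linQ _ cd(2)] by simp
  next
    case 2
    have "{c, d} = {d, c}" by blast
    then have "best Q {c, d} = d" "worst Q {c, d} = c" using best_worst_pair[OF linQ 2] cd(2) by auto
    moreover have "c = s" using moved_down_reversal[OF lin md cd(1) 2 cd(2)] .
    ultimately show ?thesis by simp
  qed
qed

lemma moved_down_outcome_unchanged:
  assumes lin: "linear_order_on A R" and md: "moved_down A R s Q"
    and W: "W \<in> S2 A" and W': "W' \<in> S2 A" and s: "s \<notin> W"
    and sp: "switch_unprofitable R Q W W'"
  shows "W' = W"
proof -
  note trans = linear_order_on_trans[OF lin] and antisym = linear_order_on_antisym[OF lin]
  note above = moved_down_above_other[OF md]
  obtain a b where ab: "W = {a, b}" "a \<noteq> b" "(a, b) \<in> R" "best R W = a" "worst R W = b"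
    using S2_ordered_pair[OF lin W] .
  obtain c d where cd: "W' = {c, d}" "c \<noteq> d" "(c, d) \<in> R" "best R W' = c" "worst R W' = d"
    using S2_ordered_pair[OF lin W'] .
  have "a \<noteq> s" "b \<noteq> s" using ab s by auto
  then have "best Q W = a" "worst Q W = b" using moved_down_best_worst_pair[OF lin md ab(3,2)] ab by auto
  then have ac: "(a, c) \<in> R" and bd: "(b, d) \<in> R"
    and Q: "(best Q W', a) \<in> Q" "(worst Q W', b) \<in> Q"
    using sp ab cd unfolding switch_unprofitable_def by auto
  from moved_down_best_worst_pair[OF lin md cd(3,2)] show ?thesis
  proof
    assume "best Q {c, d} = c \<and> worst Q {c, d} = d"
    then have "(c, a) \<in> R" "(d, b) \<in> R" using Q cd above \<open>a \<noteq> s\<close> \<open>b \<noteq> s\<close> by auto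
    then show ?thesis using ab cd ac bd antisym by blast
  next
    assume "c = s \<and> best Q {c, d} = d \<and> worst Q {c, d} = s"
    then have "(d, a) \<in> R" "(s, b) \<in> R" "c = s" using Q cd above \<open>a \<noteq> s\<close> \<open>b \<noteq> s\<close> by auto
    then have "(a, s) \<in> R" "(s, a) \<in> R" using ac bd trans by blast+
    then show ?thesis using antisym \<open>a \<noteq> s\<close> by blast
  qed
qed

lemma moved_down_outcome_below:
  assumes lin: "linear_order_on A R" and md: "moved_down A R s Q"
    and cd: "(c, d) \<in> R" "c \<noteq> d" and bs: "(b, s) \<in> R" "b \<noteq> s"
    and sp: "switch_unprofitable R Q {s, b} {c, d}"
  shows "{c, d} = {s, b} \<or> (\<exists>e\<in>passed A R s Q. {c, d} = {e, b})"
proof -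
  note antisym = linear_order_on_antisym[OF lin] and above = moved_down_above_other[OF md]
  have "{s, b} = {b, s}" by blast
  then have "best R {s, b} = b" "worst R {s, b} = s" "best Q {s, b} = b" "worst Q {s, b} = s"
    using best_worst_pair[OF lin bs] moved_down_best_worst_pair[OF lin md bs] by auto
  then have bc: "(b, c) \<in> R" and sd: "(s, d) \<in> R"
    and Q: "(best Q {c, d}, b) \<in> Q" "(worst Q {c, d}, s) \<in> Q"
    using sp best_worst_pair[OF lin cd] unfolding switch_unprofitable_def by auto
  have "d \<in> A" using linear_order_on_subset[OF lin cd(1)] by simp
  from moved_down_best_worst_pair[OF lin md cd] show ?thesis
  proof
    assume "best Q {c, d} = c \<and> worst Q {c, d} = d"
    then have "(c, b) \<in> R" "(d, s) \<in> Q" using Q above bs(2) by auto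
    then have "c = b" using bc antisym by blast
    then show ?thesis using sd \<open>(d, s) \<in> Q\<close> \<open>d \<in> A\<close> unfolding passed_def by auto
  next
    assume "c = s \<and> best Q {c, d} = d \<and> worst Q {c, d} = s"
    then have "(d, b) \<in> R" "c = s" using Q above bs(2) by auto
    then show ?thesis using bs cd(1) linear_order_on_trans[OF lin] antisym by blast
  qed
qed

lemma moved_down_outcome_above:
  assumes lin: "linear_order_on A R" and md: "moved_down A R s Q"
    and cd: "(c, d) \<in> R" "c \<noteq> d" and sb: "(s, b) \<in> R" "(s, b) \<in> Q" "s \<noteq> b"
    and sp: "switch_unprofitable R Q {s, b} {c, d}"
  shows "{c, d} = {s, b} \<or> (\<exists>e\<in>passed A R s Q. {c, d} = {e, b})"
proof -
  note antisym = linear_order_on_antisym[OF lin] and above = moved_down_above_other[OF md]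
  have "best R {s, b} = s" "worst R {s, b} = b" "best Q {s, b} = s" "worst Q {s, b} = b"
    using best_worst_pair[OF lin sb(1,3)] best_worst_pair[OF moved_down_linear[OF md] sb(2,3)]
    by auto
  then have sc: "(s, c) \<in> R" and bd: "(b, d) \<in> R"
    and Q: "(best Q {c, d}, s) \<in> Q" "(worst Q {c, d}, b) \<in> Q"
    using sp best_worst_pair[OF lin cd] unfolding switch_unprofitable_def by auto
  have "c \<in> A" using linear_order_on_subset[OF lin cd(1)] by simp
  from moved_down_best_worst_pair[OF lin md cd] show ?thesis
  proof
    assume "best Q {c, d} = c \<and> worst Q {c, d} = d"
    then have "(c, s) \<in> Q" "(d, b) \<in> R" using Q above sb(3) by auto
    then have "d = b" using bd antisym by blast
    then show ?thesis using sc \<open>(c, s) \<in> Q\<close> \<open>c \<in> A\<close> unfolding passed_def by auto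
  next
    assume "c = s \<and> best Q {c, d} = d \<and> worst Q {c, d} = s"
    then have "(d, b) \<in> Q" "c = s"
      using Q linear_order_on_trans[OF moved_down_linear[OF md]] by auto
    then show ?thesis using above[of d b] sb(3) bd antisym by auto
  qed
qed

lemma moved_down_outcome_passing:
  assumes lin: "linear_order_on A R" and md: "moved_down A R s Q"
    and cd: "(c, d) \<in> R" "c \<noteq> d" and sb: "(s, b) \<in> R" "(b, s) \<in> Q" "s \<noteq> b"
    and sp: "switch_unprofitable R Q {s, b} {c, d}"
    and single: "\<forall>x\<in>passed A R s Q. \<forall>y\<in>passed A R s Q. x = y"
  shows "{c, d} = {s, b} \<or> (\<exists>e\<in>passed A R s Q. {c, d} = {e, b})"
proof -
  have linQ: "linear_order_on A Q" using moved_down_linear[OF md] .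
  note antisym = linear_order_on_antisym[OF lin] and above = moved_down_above_other[OF md]
  have "{s, b} = {b, s}" by blast
  then have "best R {s, b} = s" "worst R {s, b} = b" "best Q {s, b} = b" "worst Q {s, b} = s"
    using best_worst_pair[OF lin sb(1,3)] best_worst_pair[OF linQ sb(2)] sb(3) by auto
  then have sc: "(s, c) \<in> R" and bd: "(b, d) \<in> R"
    and Q: "(best Q {c, d}, b) \<in> Q" "(worst Q {c, d}, s) \<in> Q"
    using sp best_worst_pair[OF lin cd] unfolding switch_unprofitable_def by auto
  have "c \<in> A" "d \<in> A" using linear_order_on_subset[OF lin cd(1)] by auto
  from moved_down_best_worst_pair[OF lin md cd] show ?thesis
  proof
    assume "best Q {c, d} = c \<and> worst Q {c, d} = d"
    then have cb: "(c, b) \<in> Q" and ds: "(d, s) \<in> Q" using Q by auto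
    have "c \<noteq> s" using cb sb(2,3) linear_order_on_antisym[OF linQ] by blast
    then have "d \<noteq> s" using sc cd antisym by blast
    have "(c, d) \<in> Q" using moved_down_agree[OF md \<open>c \<in> A\<close> \<open>d \<in> A\<close>] cd(1) \<open>c \<noteq> s\<close> \<open>d \<noteq> s\<close> by simp
    then have cs: "(c, s) \<in> Q" using ds linear_order_on_trans[OF linQ] by blast
    \<comment> \<open>s has passed both b and d: the only place where the one-step hypothesis is used\<close>
    have "b \<in> passed A R s Q" "d \<in> passed A R s Q"
      using sb linear_order_on_subset[OF lin sb(1)] linear_order_on_trans[OF lin sc cd(1)]
        ds \<open>d \<noteq> s\<close> \<open>d \<in> A\<close>
      unfolding passed_def by auto
    then have "d = b" using single by blast
    then show ?thesis using sc cs \<open>c \<noteq> s\<close> \<open>c \<in> A\<close> unfolding passed_def by auto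
  next
    assume "c = s \<and> best Q {c, d} = d \<and> worst Q {c, d} = s"
    then have "(d, b) \<in> Q" "c = s" using Q by auto
    then show ?thesis using above[of d b] sb(3) bd antisym by auto
  qed
qed

lemma moved_down_outcome_with_moved:
  assumes lin: "linear_order_on A R" and md: "moved_down A R s Q"
    and W: "{s, b} \<in> S2 A" and W': "W' \<in> S2 A"
    and sp: "switch_unprofitable R Q {s, b} W'"
    and single: "\<forall>x\<in>passed A R s Q. \<forall>y\<in>passed A R s Q. x = y"
  shows "W' = {s, b} \<or> (\<exists>c\<in>passed A R s Q. W' = {c, b})"
proof -
  obtain c d where cd: "W' = {c, d}" "c \<noteq> d" "(c, d) \<in> R"
    using S2_ordered_pair[OF lin W'] by metis
  have sb: "s \<in> A" "b \<in> A" "s \<noteq> b" using W unfolding S2_def by auto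
  then consider "(b, s) \<in> R" | "(s, b) \<in> R" "(s, b) \<in> Q" | "(s, b) \<in> R" "(b, s) \<in> Q"
    using linear_order_on_total[OF lin] linear_order_on_total[OF moved_down_linear[OF md]] by metis
  then show ?thesis
    using moved_down_outcome_below[OF lin md cd(3,2)] moved_down_outcome_above[OF lin md cd(3,2)]
      moved_down_outcome_passing[OF lin md cd(3,2) _ _ _ _ single] sp sb(3) cd(1)
    by cases auto
qed

text \<open>Q' stops s just above the last alternative y that it passes in Q; a lowest passed
  alternative is adjacent to s in Q, so swapping it back yields a linear order.\<close>

lemma moved_down_split:
  assumes lin: "linear_order_on A R" and md: "moved_down A R s Q"
    and fin: "finite A" and ne: "passed A R s Q \<noteq> {}"
  obtains Q' y where "moved_down A R s Q'" "moved_down A Q' s Q" "y \<in> passed A R s Q"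
    "passed A R s Q' = passed A R s Q - {y}" "passed A Q' s Q = {y}"
proof -
  have linQ: "linear_order_on A Q" using moved_down_linear[OF md] .
  obtain y where y: "y \<in> passed A R s Q" and lowest: "\<forall>z\<in>passed A R s Q. (z, y) \<in> Q"
    using linear_order_on_lowest[OF linQ _ ne] fin unfolding passed_def by auto
  have yA: "y \<in> A" and "y \<noteq> s" and sy: "(s, y) \<in> R" and ys: "(y, s) \<in> Q"
    using y unfolding passed_def by auto
  have adjacent: "z = y \<or> z = s" if yz: "(y, z) \<in> Q" and zs: "(z, s) \<in> Q" for z
  proof (rule ccontr)
    assume "\<not> (z = y \<or> z = s)"
    moreover have "z \<in> A" using linear_order_on_subset[OF linQ zs] by simp
    ultimately have "(y, z) \<in> R" using moved_down_agree[OF md yA] yz \<open>y \<noteq> s\<close> by simp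
    then have "z \<in> passed A R s Q"
      using linear_order_on_trans[OF lin sy] zs \<open>z \<in> A\<close> \<open>\<not> (z = y \<or> z = s)\<close>
      unfolding passed_def by auto
    then show False using lowest yz linear_order_on_antisym[OF linQ] \<open>\<not> (z = y \<or> z = s)\<close> by blast
  qed
  define Q' where "Q' = Q - {(y, s)} \<union> {(s, y)}"
  have linQ': "linear_order_on A Q'"
    unfolding Q'_def using linear_order_on_swap_adjacent[OF linQ ys \<open>y \<noteq> s\<close> adjacent] .
  have Q'_other: "(u, v) \<in> Q' \<longleftrightarrow> (u, v) \<in> Q" if "u \<noteq> s" "v \<noteq> s" for u v
    unfolding Q'_def using that by auto
  show thesis
  proof
    have "(x, z) \<in> Q' \<longleftrightarrow> (x, z) \<in> R" if "x \<in> A" "z \<in> A" "x \<noteq> s" "z \<noteq> s" for x z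
      using Q'_other moved_down_agree[OF md] that by simp
    moreover have "(s, x) \<in> R" if "x \<in> A" "(s, x) \<in> Q'" for x
      using that sy moved_down_down[OF md] unfolding Q'_def by auto
    ultimately show "moved_down A R s Q'" unfolding moved_down_def using linQ' by blast
    show "moved_down A Q' s Q"
      unfolding moved_down_def using linQ Q'_other \<open>y \<noteq> s\<close> unfolding Q'_def by auto
    show "y \<in> passed A R s Q" by fact
    show "passed A R s Q' = passed A R s Q - {y}"
      unfolding passed_def Q'_def using \<open>y \<noteq> s\<close> by auto
    show "passed A Q' s Q = {y}"
      unfolding passed_def Q'_def using yA ys \<open>y \<noteq> s\<close> linear_order_on_antisym[OF linQ] by auto
  qed
qed

lemma profile_update:
  "P \<in> profiles V A \<Longrightarrow> i \<in> V \<Longrightarrow> linear_order_on A Q \<Longrightarrow> P(i := Q) \<in> profiles V A"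
  unfolding profiles_def by auto

lemma profile_linear: "P \<in> profiles V A \<Longrightarrow> i \<in> V \<Longrightarrow> linear_order_on A (P i)"
  unfolding profiles_def by auto

lemma consular_outcome: "consular_rule V A F \<Longrightarrow> P \<in> profiles V A \<Longrightarrow> F P \<in> S2 A"
  unfolding consular_rule_def by blast

lemma SPO_SPP_switch_unprofitable:
  assumes "SPO V A F" "SPP V A F" "P \<in> profiles V A" "i \<in> V" "linear_order_on A Q"
  shows "switch_unprofitable (P i) Q (F P) (F (P(i := Q)))"
proof -
  let ?P' = "P(i := Q)"
  have "?P' \<in> profiles V A" "?P' i = Q" "?P'(i := P i) = P"
    using profile_update[OF assms(3-5)] by auto
  then show ?thesis
    using assms profile_linear[OF assms(3,4)] unfolding SPO_def SPP_def switch_unprofitable_def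
    by metis
qed

lemma consular_moved_down_other:
  assumes "consular_rule V A F" "SPO V A F" "SPP V A F" "P \<in> profiles V A" "i \<in> V"
    and md: "moved_down A (P i) s Q" and "s \<notin> F P"
  shows "F (P(i := Q)) = F P"
  using moved_down_outcome_unchanged[OF profile_linear[OF assms(4,5)] md]
    consular_outcome[OF assms(1)] profile_update[OF assms(4,5) moved_down_linear[OF md]]
    SPO_SPP_switch_unprofitable[OF assms(2-5) moved_down_linear[OF md]] assms(4,7)
  by blast

lemma consular_moved_down_past_one:
  assumes "consular_rule V A F" "SPO V A F" "SPP V A F" "P \<in> profiles V A" "i \<in> V"
    and md: "moved_down A (P i) s Q" and FP: "F P = {s, b}"
    and single: "\<forall>x\<in>passed A (P i) s Q. \<forall>y\<in>passed A (P i) s Q. x = y"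
  shows "F (P(i := Q)) = F P \<or> (\<exists>c\<in>passed A (P i) s Q. F (P(i := Q)) = {c, b})"
  using moved_down_outcome_with_moved[OF profile_linear[OF assms(4,5)] md _ _ _ single]
    consular_outcome[OF assms(1)] profile_update[OF assms(4,5) moved_down_linear[OF md]]
    SPO_SPP_switch_unprofitable[OF assms(2-5) moved_down_linear[OF md]] assms(4) FP
  by metis

lemma consular_moved_down_winner:
  assumes cons: "consular_rule V A F" and spo: "SPO V A F" and spp: "SPP V A F"
    and fin: "finite A" and P: "P \<in> profiles V A" and i: "i \<in> V"
    and FP: "F P = {s, b}" and md: "moved_down A (P i) s Q"
  shows "F (P(i := Q)) = F P \<or> (\<exists>c\<in>passed A (P i) s Q. F (P(i := Q)) = {c, b})"
  using md
proof (induction "card (passed A (P i) s Q)" arbitrary: Q rule: less_induct)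
  case less
  show ?case
  proof (cases "\<forall>x\<in>passed A (P i) s Q. \<forall>y\<in>passed A (P i) s Q. x = y")
    case True
    then show ?thesis using consular_moved_down_past_one[OF cons spo spp P i less.prems FP] by blast
  next
    case False
    then obtain Q' y where md1: "moved_down A (P i) s Q'" and md2: "moved_down A Q' s Q"
      and y: "y \<in> passed A (P i) s Q"
      and passed1: "passed A (P i) s Q' = passed A (P i) s Q - {y}"
      and passed2: "passed A Q' s Q = {y}"
      using moved_down_split[OF profile_linear[OF P i] less.prems fin] by blast
    have "card (passed A (P i) s Q') < card (passed A (P i) s Q)"
      using passed1 card_Diff1_less[OF _ y] fin unfolding passed_def by simp
    then have IH: "F (P(i := Q')) = F P \<or> (\<exists>c\<in>passed A (P i) s Q'. F (P(i := Q')) = {c, b})"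
      using less.hyps md1 by blast
    let ?P' = "P(i := Q')"
    have P': "?P' \<in> profiles V A" and P'i: "?P' i = Q'" and P'Q: "?P'(i := Q) = P(i := Q)"
      using profile_update[OF P i moved_down_linear[OF md1]] by auto
    then have md2': "moved_down A (?P' i) s Q" using md2 by simp
    from IH show ?thesis
    proof
      assume "F ?P' = F P"
      moreover have "\<forall>x\<in>passed A (?P' i) s Q. \<forall>z\<in>passed A (?P' i) s Q. x = z"
        using passed2 P'i by simp
      ultimately have "F (?P'(i := Q)) = F P \<or> (\<exists>c\<in>{y}. F (?P'(i := Q)) = {c, b})"
        using consular_moved_down_past_one[OF cons spo spp P' i md2'] FP passed2 P'i by metis
      then show ?thesis using y P'Q by auto
    next
      assume "\<exists>c\<in>passed A (P i) s Q'. F ?P' = {c, b}"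
      then obtain c where c: "c \<in> passed A (P i) s Q'" and FP': "F ?P' = {c, b}" by blast
      have "s \<noteq> b" using consular_outcome[OF cons P] FP unfolding S2_def by auto
      then have "s \<notin> F ?P'" using c FP' unfolding passed_def by auto
      then have "F (?P'(i := Q)) = {c, b}"
        using consular_moved_down_other[OF cons spo spp P' i md2'] FP' by metis
      then have "F (P(i := Q)) = {c, b}" using P'Q by simp
      then show ?thesis using c passed1 by blast
    qed
  qed
qed

theorem lemma12:
  fixes V :: "'v set" and A :: "'a set" and F :: "('v \<Rightarrow> 'a rel) \<Rightarrow> 'a set"
  assumes "finite V" and "V \<noteq> {}" and "finite A"
    and "consular_rule V A F" and "SPP V A F" and "SPO V A F"
    and "P \<in> profiles V A" and "F P = {a, b}"
    and "i \<in> V" and "s \<in> A" and "moved_down A (P i) s Q"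
  shows "(s \<notin> {a, b} \<longrightarrow> F (P(i := Q)) = F P) \<and>
         (s = a \<longrightarrow> F (P(i := Q)) = F P \<or>
            (\<exists>c. c \<noteq> s \<and> F (P(i := Q)) = {c, b} \<and> (s, c) \<in> P i \<and> (c, s) \<in> Q))"
proof (intro conjI impI)
  assume "s \<notin> {a, b}"
  then show "F (P(i := Q)) = F P"
    using consular_moved_down_other[OF assms(4,6,5,7,9,11)] assms(8) by simp
next
  assume "s = a"
  then have "F P = {s, b}" using assms(8) by simp
  from consular_moved_down_winner[OF assms(4,6,5,3,7,9) this assms(11)]
  show "F (P(i := Q)) = F P \<or>
      (\<exists>c. c \<noteq> s \<and> F (P(i := Q)) = {c, b} \<and> (s, c) \<in> P i \<and> (c, s) \<in> Q)"
    unfolding passed_def by blast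
qed

end
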